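(* Let $F$ be a random forest and $L$ a bi-stable labelling of its explanation BAG $\mathcal{B}_F$, and let $S_L=S_{1,j_1}\times\dots\times S_{k,j_k}$ where, for each feature $X_i$, $A_{X_i\in S_{i,j_i}}$ is the feature argument of $X_i$ labelled $\mathrm{in}$ by $L$. Then for every tree $T\in F$ and every rule $r\in T$, $L(A_{T,r})=\mathrm{in}$ if and only if $r$ is the active rule in $T$ for all inputs $x\in S_L$. Furthermore, all rule arguments $A_{T,r'}$ of $T$ other than the one labelled $\mathrm{in}$ are labelled $\mathrm{out}$.
   Context: Features $X_1,\dots,X_k$ have domains $D_1,\dots,D_k$; each feature is categorical (finite domain) or numerical ($D_i\subseteq\mathbb{R}$). Inputs are $x\in D_1\times\dots\times D_k$; $\mathcal{C}$ is a finite set of class labels. Feature conditions are $X_i=v$ (categorical) or $X_i\le v$ (numerical); a feature literal is a condition or its negation. A rule $r$ is $\mathrm{prem}(r)\rightarrow\mathrm{conc}(r)$ with $\mathrm{prem}(r)$ a finite set of feature literals and $\mathrm{conc}(r)\in\mathcal{C}$. A decision tree $T$ is a finite set of rules such that every input satisfies the premise of exactly one rule of $T$, the active rule in $T$ for $x$. A random forest $F$ is a finite set of decision trees. Domain partition: for a categorical feature, the singletons $\{v\}$, $v\in D_i$; for a numerical feature with distinct thresholds $v_1<\dots<v_m$ occurring in conditions $X_i\le v$ in $F$, the sets $D_i\cap(-\infty,v_1]$, $D_i\cap(v_{j-1},v_j]$ ($2\le j\le m$), $D_i\cap(v_m,\infty)$; denote them $S_{i,1},\dots,S_{i,n_i}$.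 A BAG is $(\mathcal{A},\mathrm{Att},\mathrm{Sup})$ with $\mathcal{A}$ finite and $\mathrm{Att},\mathrm{Sup}\subseteq\mathcal{A}\times\mathcal{A}$; $\mathrm{Att}(A)=\{B:(B,A)\in\mathrm{Att}\}$, $\mathrm{Sup}(A)=\{B:(B,A)\in\mathrm{Sup}\}$. A labelling is a map $L:\mathcal{A}\to\{\mathrm{in},\mathrm{out},\mathrm{und}\}$. The attackers of $A$ dominate its supporters if $|\{B\in\mathrm{Att}(A):L(B)=\mathrm{in}\}|>|\{B\in\mathrm{Sup}(A):L(B)\ne\mathrm{out}\}|$; the supporters dominate the attackers if $|\{B\in\mathrm{Sup}(A):L(B)=\mathrm{in}\}|>|\{B\in\mathrm{Att}(A):L(B)\ne\mathrm{out}\}|$. $L$ is bi-complete if for every $A$: $L(A)=\mathrm{in}$ iff ($L(B)=\mathrm{out}$ for all $B\in\mathrm{Att}(A)$ or $A$'s supporters dominate its attackers), and $L(A)=\mathrm{out}$ iff $A$'s attackers dominate its supporters. $L$ is bi-stable if it is bi-complete and labels nothing $\mathrm{und}$ (a bi-stable labelling of $\mathcal{B}_F$ labels exactly one feature argument of each feature $\mathrm{in}$). The explanation BAG $\mathcal{B}_F$ has arguments: a class argument $A_y$ for each $y\in\mathcal{C}$; a rule argument $A_{T,r}$ for each $T\in F$, $r\in T$ (the rule arguments of $T$); a feature argument $A_{X_i\in S_{i,j}}$ for each feature $i$ and partition set $S_{i,j}$. Attacks: between any two distinct feature arguments of the same feature; from $A_{X_i\in S_{i,j}}$ to $A_{T,r}$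 whenever some literal in $\mathrm{prem}(r)$ is satisfied by no value in $S_{i,j}$; from $A_{T,r}$ to $A_y$ whenever $\mathrm{conc}(r)\ne y$. Supports: from $A_{T,r}$ to $A_y$ whenever $\mathrm{conc}(r)=y$. No other attacks or supports. *)

theory Defs
  imports Complex_Main
begin

text \<open>Feature values: categorical values (of an arbitrary type 'a) or real numbers.
  Features are indexed by 0..<k (the paper's X_1..X_k).\<close>
datatype 'a fval = Cat 'a | Num real

datatype 'a fcond = CEq nat 'a | CLe nat real

fun cond_feat :: "'a fcond \<Rightarrow> nat" where
  "cond_feat (CEq i _) = i"
| "cond_feat (CLe i _) = i"

fun cond_holds :: "'a fcond \<Rightarrow> 'a fval \<Rightarrow> bool" where
  "cond_holds (CEq _ a) v = (v = Cat a)"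
| "cond_holds (CLe _ t) v = (\<exists>r. v = Num r \<and> r \<le> t)"

text \<open>A feature literal: a condition (polarity True) or its negation (polarity False).\<close>
type_synonym 'a lit = "bool \<times> 'a fcond"

definition lit_feat :: "'a lit \<Rightarrow> nat" where
  "lit_feat l = cond_feat (snd l)"

definition lit_holds :: "'a lit \<Rightarrow> 'a fval \<Rightarrow> bool" where
  "lit_holds l v = (if fst l then cond_holds (snd l) v else \<not> cond_holds (snd l) v)"

type_synonym ('a,'c) rule = "'a lit set \<times> 'c"
type_synonym ('a,'c) tree = "('a,'c) rule set"

definition prem :: "('a,'c) rule \<Rightarrow> 'a lit set" where "prem r = fst r"
definition conc :: "('a,'c) rule \<Rightarrow> 'c" where "conc r = snd r"

definition is_input :: "nat \<Rightarrow> (nat \<Rightarrow> 'a fval set) \<Rightarrow> (nat \<Rightarrow> 'a fval) \<Rightarrow> bool" where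
  "is_input k D x \<longleftrightarrow> (\<forall>i<k. x i \<in> D i)"

definition sat_prem :: "('a,'c) rule \<Rightarrow> (nat \<Rightarrow> 'a fval) \<Rightarrow> bool" where
  "sat_prem r x \<longleftrightarrow> (\<forall>l\<in>prem r. lit_holds l (x (lit_feat l)))"

definition active_rule :: "('a,'c) tree \<Rightarrow> (nat \<Rightarrow> 'a fval) \<Rightarrow> ('a,'c) rule \<Rightarrow> bool" where
  "active_rule T x r \<longleftrightarrow> r \<in> T \<and> sat_prem r x"

definition feature_space :: "nat \<Rightarrow> (nat \<Rightarrow> bool) \<Rightarrow> (nat \<Rightarrow> 'a fval set) \<Rightarrow> bool" where
  "feature_space k num D \<longleftrightarrow> (\<forall>i<k. D i \<noteq> {} \<and>
      (num i \<longrightarrow> D i \<subseteq> range Num) \<and>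
      (\<not> num i \<longrightarrow> finite (D i) \<and> D i \<subseteq> range Cat))"

definition cond_ok :: "nat \<Rightarrow> (nat \<Rightarrow> bool) \<Rightarrow> 'a fcond \<Rightarrow> bool" where
  "cond_ok k num c \<longleftrightarrow> cond_feat c < k \<and>
      (case c of CEq i _ \<Rightarrow> \<not> num i | CLe i _ \<Rightarrow> num i)"

definition is_rule :: "nat \<Rightarrow> (nat \<Rightarrow> bool) \<Rightarrow> 'c set \<Rightarrow> ('a,'c) rule \<Rightarrow> bool" where
  "is_rule k num C r \<longleftrightarrow> finite (prem r) \<and> conc r \<in> C \<and> (\<forall>l\<in>prem r. cond_ok k num (snd l))"

definition decision_tree ::
  "nat \<Rightarrow> (nat \<Rightarrow> bool) \<Rightarrow> (nat \<Rightarrow> 'a fval set) \<Rightarrow> 'c set \<Rightarrow> ('a,'c) tree \<Rightarrow> bool" where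
  "decision_tree k num D C T \<longleftrightarrow> finite T \<and> (\<forall>r\<in>T. is_rule k num C r) \<and>
      (\<forall>x. is_input k D x \<longrightarrow> (\<exists>!r. r \<in> T \<and> sat_prem r x))"

definition random_forest ::
  "nat \<Rightarrow> (nat \<Rightarrow> bool) \<Rightarrow> (nat \<Rightarrow> 'a fval set) \<Rightarrow> 'c set \<Rightarrow> ('a,'c) tree set \<Rightarrow> bool" where
  "random_forest k num D C F \<longleftrightarrow> finite F \<and> (\<forall>T\<in>F. decision_tree k num D C T)"

definition thresholds :: "('a,'c) tree set \<Rightarrow> nat \<Rightarrow> real set" where
  "thresholds F i = {t. \<exists>T\<in>F. \<exists>r\<in>T. \<exists>p. (p, CLe i t) \<in> prem r}"

definition num_cells :: "(nat \<Rightarrow> 'a fval set) \<Rightarrow> ('a,'c) tree set \<Rightarrow> nat \<Rightarrow> 'a fval set set" where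
  "num_cells D F i = (let vs = sorted_list_of_set (thresholds F i) in
     if vs = [] then {D i}
     else {D i \<inter> Num ` {..hd vs}}
        \<union> {D i \<inter> Num ` {vs ! (j - 1)<..vs ! j} | j. 1 \<le> j \<and> j < length vs}
        \<union> {D i \<inter> Num ` {last vs<..}})"

text \<open>The partition sets S_{i,j} of feature i (empty pieces are not blocks of a partition).\<close>
definition part_sets ::
  "(nat \<Rightarrow> bool) \<Rightarrow> (nat \<Rightarrow> 'a fval set) \<Rightarrow> ('a,'c) tree set \<Rightarrow> nat \<Rightarrow> 'a fval set set" where
  "part_sets num D F i =
     {S \<in> (if num i then num_cells D F i else {{v} | v. v \<in> D i}). S \<noteq> {}}"

datatype label = In | Out | Und

definition attackers :: "('b \<times> 'b) set \<Rightarrow> 'b \<Rightarrow> 'b set" where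
  "attackers R A = {B. (B, A) \<in> R}"

definition att_dominate :: "('b \<times> 'b) set \<Rightarrow> ('b \<times> 'b) set \<Rightarrow> ('b \<Rightarrow> label) \<Rightarrow> 'b \<Rightarrow> bool" where
  "att_dominate At Sp L A \<longleftrightarrow>
     card {B \<in> attackers At A. L B = In} > card {B \<in> attackers Sp A. L B \<noteq> Out}"

definition sup_dominate :: "('b \<times> 'b) set \<Rightarrow> ('b \<times> 'b) set \<Rightarrow> ('b \<Rightarrow> label) \<Rightarrow> 'b \<Rightarrow> bool" where
  "sup_dominate At Sp L A \<longleftrightarrow>
     card {B \<in> attackers Sp A. L B = In} > card {B \<in> attackers At A. L B \<noteq> Out}"

definition bi_complete :: "'b set \<Rightarrow> ('b \<times> 'b) set \<Rightarrow> ('b \<times> 'b) set \<Rightarrow> ('b \<Rightarrow> label) \<Rightarrow> bool" where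
  "bi_complete Args At Sp L \<longleftrightarrow> (\<forall>A\<in>Args.
      (L A = In \<longleftrightarrow> ((\<forall>B\<in>attackers At A. L B = Out) \<or> sup_dominate At Sp L A)) \<and>
      (L A = Out \<longleftrightarrow> att_dominate At Sp L A))"

definition bi_stable :: "'b set \<Rightarrow> ('b \<times> 'b) set \<Rightarrow> ('b \<times> 'b) set \<Rightarrow> ('b \<Rightarrow> label) \<Rightarrow> bool" where
  "bi_stable Args At Sp L \<longleftrightarrow> bi_complete Args At Sp L \<and> (\<forall>A\<in>Args. L A \<noteq> Und)"

datatype ('a,'c) arg =
    ClassArg 'c
  | RuleArg "('a,'c) tree" "('a,'c) rule"
  | FeatArg nat "'a fval set"

definition ex_args ::
  "nat \<Rightarrow> (nat \<Rightarrow> bool) \<Rightarrow> (nat \<Rightarrow> 'a fval set) \<Rightarrow> 'c set \<Rightarrow> ('a,'c) tree set \<Rightarrow> ('a,'c) arg set" where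
  "ex_args k num D C F =
     ClassArg ` C
     \<union> {RuleArg T r | T r. T \<in> F \<and> r \<in> T}
     \<union> {FeatArg i S | i S. i < k \<and> S \<in> part_sets num D F i}"

definition ex_att ::
  "nat \<Rightarrow> (nat \<Rightarrow> bool) \<Rightarrow> (nat \<Rightarrow> 'a fval set) \<Rightarrow> 'c set \<Rightarrow> ('a,'c) tree set \<Rightarrow> (('a,'c) arg \<times> ('a,'c) arg) set" where
  "ex_att k num D C F =
     {(FeatArg i S, FeatArg i S') | i S S'.
        i < k \<and> S \<in> part_sets num D F i \<and> S' \<in> part_sets num D F i \<and> S \<noteq> S'}
     \<union> {(FeatArg i S, RuleArg T r) | i S T r.
        i < k \<and> S \<in> part_sets num D F i \<and> T \<in> F \<and> r \<in> T \<and>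
        (\<exists>l\<in>prem r. lit_feat l = i \<and> (\<forall>v\<in>S. \<not> lit_holds l v))}
     \<union> {(RuleArg T r, ClassArg y) | T r y. T \<in> F \<and> r \<in> T \<and> y \<in> C \<and> conc r \<noteq> y}"

definition ex_sup ::
  "nat \<Rightarrow> (nat \<Rightarrow> bool) \<Rightarrow> (nat \<Rightarrow> 'a fval set) \<Rightarrow> 'c set \<Rightarrow> ('a,'c) tree set \<Rightarrow> (('a,'c) arg \<times> ('a,'c) arg) set" where
  "ex_sup k num D C F =
     {(RuleArg T r, ClassArg y) | T r y. T \<in> F \<and> r \<in> T \<and> y \<in> C \<and> conc r = y}"

definition S_L ::
  "nat \<Rightarrow> (nat \<Rightarrow> bool) \<Rightarrow> (nat \<Rightarrow> 'a fval set) \<Rightarrow> ('a,'c) tree set \<Rightarrow> (('a,'c) arg \<Rightarrow> label)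
     \<Rightarrow> (nat \<Rightarrow> 'a fval) set" where
  "S_L k num D F L =
     {x. \<forall>i<k. x i \<in> (THE S. S \<in> part_sets num D F i \<and> L (FeatArg i S) = In)}"

end

theory Submission
  imports Defs
begin

(* Feature arguments of the same feature attack each other and have no supporters, so a
   bi-stable labelling accepts exactly one partition set per feature, and S_L is the product of
   these sets. Rule arguments have no supporters either, so a rule argument is in iff all its
   attackers are out, i.e. iff no literal of its premise fails on the whole selected set of its
   feature. The thresholds of the forest are the cut points of the partition, so every literal is
   constant on each partition set; hence a rule argument is in iff its premise holds at one, or
   equivalently every, input of S_L. As S_L is a nonempty set of inputs and a tree has exactly one
   active rule per input, exactly one rule argument of each tree is in, and the others, not being
   undecided, are out. *)

lemma list_intervals_cover:
  fixes vs :: "real list"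
  assumes "vs \<noteq> []"
  shows "a \<le> hd vs \<or> last vs < a \<or> (\<exists>j. 1 \<le> j \<and> j < length vs \<and> a \<in> {vs!(j-1)<..vs!j})"
  using assms
proof (induction vs rule: list_nonempty_induct)
  case (single x)
  then show ?case by auto
next
  case (cons x xs)
  show ?case
  proof (cases "a \<le> x")
    case False
    from cons.IH show ?thesis
    proof (elim disjE exE)
      assume "a \<le> hd xs"
      then have "a \<in> {(x # xs)!0<..(x # xs)!1}"
        using False cons.hyps by (simp add: hd_conv_nth)
      then show ?thesis using cons.hyps by (intro disjI2 exI[of _ 1]) auto
    next
      fix j assume "1 \<le> j \<and> j < length xs \<and> a \<in> {xs!(j-1)<..xs!j}"
      then show ?thesis
        by (intro disjI2 exI[of _ "Suc j"]) (auto simp: nth_Cons')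
    qed (use cons.hyps in simp)
  qed simp
qed

lemma sorted_intervals_one_side:
  fixes vs :: "real list"
  assumes "sorted vs" "t \<in> set vs"
  shows "a \<le> hd vs \<Longrightarrow> a \<le> t"
    and "last vs < a \<Longrightarrow> t < a"
    and "1 \<le> j \<Longrightarrow> j < length vs \<Longrightarrow> a \<in> {vs!(j-1)<..vs!j} \<Longrightarrow> b \<in> {vs!(j-1)<..vs!j}
         \<Longrightarrow> a \<le> t \<longleftrightarrow> b \<le> t"
proof -
  obtain s where s: "s < length vs" "t = vs!s" using assms(2) by (metis in_set_conv_nth)
  then have "vs \<noteq> []" by auto
  then have "hd vs \<le> t" "t \<le> last vs"
    using s assms(1) by (simp_all add: hd_conv_nth last_conv_nth sorted_nth_mono)
  then show "a \<le> hd vs \<Longrightarrow> a \<le> t" "last vs < a \<Longrightarrow> t < a" by simp_all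
  assume "1 \<le> j" "j < length vs" "a \<in> {vs!(j-1)<..vs!j}" "b \<in> {vs!(j-1)<..vs!j}"
  moreover have "vs!j \<le> t \<or> t \<le> vs!(j-1)"
    using s assms(1) \<open>j < length vs\<close> by (cases "j \<le> s") (auto simp: sorted_nth_mono)
  ultimately show "a \<le> t \<longleftrightarrow> b \<le> t" by auto
qed

lemma num_cells_nonempty_thresholds:
  assumes "sorted_list_of_set (thresholds F i) = vs" "vs \<noteq> []"
  shows "num_cells D F i = {D i \<inter> Num ` {..hd vs}, D i \<inter> Num ` {last vs<..}}
     \<union> {D i \<inter> Num ` {vs!(j-1)<..vs!j} | j. 1 \<le> j \<and> j < length vs}"
  using assms unfolding num_cells_def Let_def by auto

lemma num_cells_cover:
  assumes "Num a \<in> D i"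
  shows "\<exists>S\<in>num_cells D F i. Num a \<in> S"
proof (cases "sorted_list_of_set (thresholds F i) = []")
  case True
  then show ?thesis using assms unfolding num_cells_def by simp
next
  case False
  define vs where "vs = sorted_list_of_set (thresholds F i)"
  have cells: "num_cells D F i = {D i \<inter> Num ` {..hd vs}, D i \<inter> Num ` {last vs<..}}
     \<union> {D i \<inter> Num ` {vs!(j-1)<..vs!j} | j. 1 \<le> j \<and> j < length vs}"
    using False by (intro num_cells_nonempty_thresholds) (simp_all add: vs_def)
  have "vs \<noteq> []" using False by (simp add: vs_def)
  with list_intervals_cover[of vs a] consider
      "a \<le> hd vs" | "last vs < a" | j where "1 \<le> j" "j < length vs" "a \<in> {vs!(j-1)<..vs!j}"
    by blast
  then show ?thesis
  proof cases
    case 1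
    have "D i \<inter> Num ` {..hd vs} \<in> num_cells D F i" unfolding cells by simp
    moreover have "Num a \<in> D i \<inter> Num ` {..hd vs}" using 1 assms by simp
    ultimately show ?thesis ..
  next
    case 2
    have "D i \<inter> Num ` {last vs<..} \<in> num_cells D F i" unfolding cells by simp
    moreover have "Num a \<in> D i \<inter> Num ` {last vs<..}" using 2 assms by simp
    ultimately show ?thesis ..
  next
    case 3
    have "D i \<inter> Num ` {vs!(j-1)<..vs!j} \<in> num_cells D F i" unfolding cells using 3 by blast
    moreover have "Num a \<in> D i \<inter> Num ` {vs!(j-1)<..vs!j}" using 3 assms by simp
    ultimately show ?thesis ..
  qed
qed

lemma num_cells_threshold_side:
  assumes "finite (thresholds F i)" "t \<in> thresholds F i"
    and "S \<in> num_cells D F i" "Num a \<in> S" "Num b \<in> S"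
  shows "a \<le> t \<longleftrightarrow> b \<le> t"
proof -
  define vs where "vs = sorted_list_of_set (thresholds F i)"
  have vs: "sorted vs" "t \<in> set vs" using assms(1,2) by (simp_all add: vs_def)
  then have "vs \<noteq> []" by auto
  then have "S \<in> {D i \<inter> Num ` {..hd vs}, D i \<inter> Num ` {last vs<..}}
     \<union> {D i \<inter> Num ` {vs!(j-1)<..vs!j} | j. 1 \<le> j \<and> j < length vs}"
    using assms(3) num_cells_nonempty_thresholds[OF vs_def[symmetric]] by simp
  then consider "S = D i \<inter> Num ` {..hd vs}" | "S = D i \<inter> Num ` {last vs<..}"
    | j where "1 \<le> j" "j < length vs" "S = D i \<inter> Num ` {vs!(j-1)<..vs!j}"
    by blast
  then show ?thesis
  proof cases
    case 1
    then have "a \<le> hd vs" "b \<le> hd vs" using assms(4,5) by auto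
    then show ?thesis using sorted_intervals_one_side(1)[OF vs] by auto
  next
    case 2
    then have "last vs < a" "last vs < b" using assms(4,5) by auto
    then show ?thesis using sorted_intervals_one_side(2)[OF vs] by force
  next
    case 3
    then have "a \<in> {vs!(j-1)<..vs!j}" "b \<in> {vs!(j-1)<..vs!j}" using assms(4,5) by auto
    then show ?thesis using sorted_intervals_one_side(3)[OF vs] 3 by blast
  qed
qed

lemma finite_thresholds:
  assumes "random_forest k num D C F"
  shows "finite (thresholds F i)"
proof -
  have "thresholds F i \<subseteq> (\<lambda>l. case snd l of CLe _ t \<Rightarrow> t | CEq _ _ \<Rightarrow> 0) ` (\<Union>T\<in>F. \<Union>r\<in>T. prem r)"
    unfolding thresholds_def by force
  moreover have "finite (\<Union>T\<in>F. \<Union>r\<in>T. prem r)"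
    using assms unfolding random_forest_def decision_tree_def is_rule_def by auto
  ultimately show ?thesis by (meson finite_imageI finite_subset)
qed

lemma part_sets_subset:
  "S \<in> part_sets num D F i \<Longrightarrow> S \<subseteq> D i"
  unfolding part_sets_def num_cells_def Let_def by (auto split: if_splits)

lemma part_sets_cover:
  assumes "feature_space k num D" "i < k" "v \<in> D i"
  shows "\<exists>S\<in>part_sets num D F i. v \<in> S"
proof (cases "num i")
  case True
  then obtain a where "v = Num a" using assms unfolding feature_space_def by auto
  then show ?thesis
    using True num_cells_cover[of a D i F] assms(3) unfolding part_sets_def by auto
next
  case False
  then show ?thesis using assms(3) unfolding part_sets_def by auto
qed

lemma finite_part_sets:
  assumes "feature_space k num D" "i < k"
  shows "finite (part_sets num D F i)"
proof (cases "num i")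
  case True
  define vs where "vs = sorted_list_of_set (thresholds F i)"
  have "finite {D i \<inter> Num ` {vs!(j-1)<..vs!j} | j. 1 \<le> j \<and> j < length vs}"
    by (rule finite_image_set) simp
  then have "finite (num_cells D F i)" unfolding num_cells_def Let_def vs_def[symmetric] by simp
  then show ?thesis using True unfolding part_sets_def by simp
next
  case False
  then have "finite (D i)" using assms unfolding feature_space_def by auto
  then show ?thesis using False unfolding part_sets_def by (simp add: setcompr_eq_image)
qed

lemma lit_holds_constant_on_part_sets:
  assumes "feature_space k num D" "random_forest k num D C F"
    and "T \<in> F" "r \<in> T" "l \<in> prem r"
    and "S \<in> part_sets num D F (lit_feat l)" "v \<in> S" "w \<in> S"
  shows "lit_holds l v \<longleftrightarrow> lit_holds l w"
proof -
  obtain p c where l: "l = (p, c)" by (cases l)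
  have "\<forall>l\<in>prem r. cond_ok k num (snd l)"
    using assms(2-4) unfolding random_forest_def decision_tree_def is_rule_def by blast
  then have ok: "cond_ok k num c" using assms(5) l by force
  show ?thesis
  proof (cases c)
    case (CEq i a)
    then have "\<not> num (lit_feat l)" using ok l unfolding cond_ok_def lit_feat_def by simp
    then obtain u where "S = {u}" using assms(6) unfolding part_sets_def by auto
    then show ?thesis using assms(7,8) by simp
  next
    case (CLe i t)
    then have i: "lit_feat l = i" "num i" "i < k" using ok l unfolding cond_ok_def lit_feat_def by auto
    have "v \<in> D i" "w \<in> D i" using part_sets_subset assms(6-8) i(1) by blast+
    then obtain a b where ab: "v = Num a" "w = Num b"
      using assms(1) i unfolding feature_space_def by blast
    have "t \<in> thresholds F i" using assms(3-5) l CLe unfolding thresholds_def by blast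
    moreover have "S \<in> num_cells D F i" using assms(6) i unfolding part_sets_def by simp
    ultimately have "a \<le> t \<longleftrightarrow> b \<le> t"
      using num_cells_threshold_side[OF finite_thresholds[OF assms(2)]] assms(7,8) ab by blast
    then show ?thesis using ab l CLe unfolding lit_holds_def by simp
  qed
qed

lemma bi_complete_unsupported_In_iff:
  assumes "bi_complete Args At Sp L" "A \<in> Args" "attackers Sp A = {}"
  shows "L A = In \<longleftrightarrow> (\<forall>B\<in>attackers At A. L B = Out)"
  using assms unfolding bi_complete_def sup_dominate_def by auto

lemma bi_complete_unsupported_Out_iff:
  assumes "bi_complete Args At Sp L" "A \<in> Args" "attackers Sp A = {}" "finite (attackers At A)"
  shows "L A = Out \<longleftrightarrow> (\<exists>B\<in>attackers At A. L B = In)"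
  using assms unfolding bi_complete_def att_dominate_def by (auto simp: card_gt_0_iff)

lemma bi_stable_ex1_In_unsupported_clique:
  assumes stable: "bi_stable Args At Sp L" and "X \<subseteq> Args" "finite X" "X \<noteq> {}"
    and clique: "\<And>A. A \<in> X \<Longrightarrow> attackers At A = X - {A}"
    and unsupported: "\<And>A. A \<in> X \<Longrightarrow> attackers Sp A = {}"
  shows "\<exists>!A. A \<in> X \<and> L A = In"
proof -
  have complete: "bi_complete Args At Sp L" and labelled: "\<And>A. A \<in> X \<Longrightarrow> L A \<noteq> Und"
    using stable \<open>X \<subseteq> Args\<close> unfolding bi_stable_def by auto
  have In_iff: "L A = In \<longleftrightarrow> (\<forall>B\<in>X - {A}. L B = Out)" if "A \<in> X" for A
    using bi_complete_unsupported_In_iff[OF complete _ unsupported] clique that \<open>X \<subseteq> Args\<close> by auto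
  have Out_iff: "L A = Out \<longleftrightarrow> (\<exists>B\<in>X - {A}. L B = In)" if "A \<in> X" for A
    using bi_complete_unsupported_Out_iff[OF complete _ unsupported] clique that \<open>X \<subseteq> Args\<close> \<open>finite X\<close>
    by auto
  obtain A0 where "A0 \<in> X" using \<open>X \<noteq> {}\<close> by blast
  then have "\<exists>A\<in>X. L A = In"
    using labelled[of A0] Out_iff[of A0] by (cases "L A0") auto
  moreover have "A = B" if "A \<in> X" "B \<in> X" "L A = In" "L B = In" for A B
    using that In_iff[of A] by force
  ultimately show ?thesis by blast
qed

lemma attackers_ex_sup_FeatArg: "attackers (ex_sup k num D C F) (FeatArg i S) = {}"
  unfolding attackers_def ex_sup_def by simp

lemma attackers_ex_sup_RuleArg: "attackers (ex_sup k num D C F) (RuleArg T r) = {}"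
  unfolding attackers_def ex_sup_def by simp

lemma attackers_ex_att_FeatArg:
  assumes "i < k" "S \<in> part_sets num D F i"
  shows "attackers (ex_att k num D C F) (FeatArg i S) = FeatArg i ` (part_sets num D F i - {S})"
  using assms unfolding attackers_def ex_att_def by auto

lemma attackers_ex_att_RuleArg:
  assumes "T \<in> F" "r \<in> T"
  shows "attackers (ex_att k num D C F) (RuleArg T r) =
    {FeatArg i S | i S. i < k \<and> S \<in> part_sets num D F i \<and>
       (\<exists>l\<in>prem r. lit_feat l = i \<and> (\<forall>v\<in>S. \<not> lit_holds l v))}"
  using assms unfolding attackers_def ex_att_def by blast

lemma random_forest_lit_feat_less:
  assumes "random_forest k num D C F" "T \<in> F" "r \<in> T" "l \<in> prem r"
  shows "lit_feat l < k"
  using assms unfolding random_forest_def decision_tree_def is_rule_def cond_ok_def lit_feat_def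
  by blast

locale labelled_explanation_bag =
  fixes k :: nat and num :: "nat \<Rightarrow> bool" and D :: "nat \<Rightarrow> 'a fval set"
    and C :: "'c set" and F :: "('a,'c) tree set" and L :: "('a,'c) arg \<Rightarrow> label"
  assumes feature_space: "feature_space k num D"
    and random_forest: "random_forest k num D C F"
    and bi_stable: "bi_stable (ex_args k num D C F) (ex_att k num D C F) (ex_sup k num D C F) L"
begin

lemma bi_complete: "bi_complete (ex_args k num D C F) (ex_att k num D C F) (ex_sup k num D C F) L"
  using bi_stable unfolding bi_stable_def by blast

lemma FeatArg_in_ex_args: "i < k \<Longrightarrow> S \<in> part_sets num D F i \<Longrightarrow> FeatArg i S \<in> ex_args k num D C F"
  unfolding ex_args_def by blast

lemma RuleArg_in_ex_args: "T \<in> F \<Longrightarrow> r \<in> T \<Longrightarrow> RuleArg T r \<in> ex_args k num D C F"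
  unfolding ex_args_def by blast

lemma ex1_FeatArg_In:
  assumes "i < k"
  shows "\<exists>!S. S \<in> part_sets num D F i \<and> L (FeatArg i S) = In"
proof -
  let ?X = "FeatArg i ` part_sets num D F i"
  obtain v where "v \<in> D i" using feature_space assms unfolding feature_space_def by blast
  then have "part_sets num D F i \<noteq> {}" using part_sets_cover[OF feature_space assms] by blast
  then have "\<exists>!A. A \<in> ?X \<and> L A = In"
    using assms finite_part_sets[OF feature_space assms]
    by (intro bi_stable_ex1_In_unsupported_clique[OF bi_stable])
      (auto simp: FeatArg_in_ex_args attackers_ex_att_FeatArg attackers_ex_sup_FeatArg)
  then show ?thesis by blast
qed

definition selected_part :: "nat \<Rightarrow> 'a fval set" where
  "selected_part i = (THE S. S \<in> part_sets num D F i \<and> L (FeatArg i S) = In)"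

lemma selected_part_in_part_sets: "i < k \<Longrightarrow> selected_part i \<in> part_sets num D F i"
  and FeatArg_selected_part_In: "i < k \<Longrightarrow> L (FeatArg i (selected_part i)) = In"
  using theI'[OF ex1_FeatArg_In] unfolding selected_part_def by blast+

lemma FeatArg_In_iff:
  "i < k \<Longrightarrow> S \<in> part_sets num D F i \<Longrightarrow> L (FeatArg i S) = In \<longleftrightarrow> S = selected_part i"
  using ex1_FeatArg_In selected_part_in_part_sets FeatArg_selected_part_In by blast

lemma S_L_eq: "S_L k num D F L = {x. \<forall>i<k. x i \<in> selected_part i}"
  unfolding S_L_def selected_part_def ..

lemma S_L_nonempty: "S_L k num D F L \<noteq> {}"
proof -
  have "selected_part i \<noteq> {}" if "i < k" for i
    using selected_part_in_part_sets[OF that] unfolding part_sets_def by blast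
  then have "(\<lambda>i. SOME v. v \<in> selected_part i) \<in> S_L k num D F L"
    unfolding S_L_eq by (simp add: some_in_eq)
  then show ?thesis by blast
qed

lemma S_L_inputs: "x \<in> S_L k num D F L \<Longrightarrow> is_input k D x"
  using selected_part_in_part_sets part_sets_subset unfolding S_L_eq is_input_def by blast

lemma RuleArg_In_iff:
  assumes "T \<in> F" "r \<in> T"
  shows "L (RuleArg T r) = In \<longleftrightarrow> (\<forall>l\<in>prem r. \<exists>v\<in>selected_part (lit_feat l). lit_holds l v)"
proof -
  have Out_iff: "L (FeatArg i S) = Out \<longleftrightarrow> S \<noteq> selected_part i"
    if "i < k" "S \<in> part_sets num D F i" for i S
    using FeatArg_In_iff[OF that] bi_stable FeatArg_in_ex_args[OF that]
    unfolding bi_stable_def by (cases "L (FeatArg i S)") auto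
  have "L (RuleArg T r) = In \<longleftrightarrow> (\<forall>B\<in>attackers (ex_att k num D C F) (RuleArg T r). L B = Out)"
    using bi_complete_unsupported_In_iff[OF bi_complete RuleArg_in_ex_args[OF assms]]
    by (simp add: attackers_ex_sup_RuleArg)
  also have "\<dots> \<longleftrightarrow> (\<forall>i<k. \<forall>S\<in>part_sets num D F i.
      (\<exists>l\<in>prem r. lit_feat l = i \<and> (\<forall>v\<in>S. \<not> lit_holds l v)) \<longrightarrow> L (FeatArg i S) = Out)"
    unfolding attackers_ex_att_RuleArg[OF assms] by blast
  also have "\<dots> \<longleftrightarrow> (\<forall>i<k. \<forall>S\<in>part_sets num D F i.
      (\<exists>l\<in>prem r. lit_feat l = i \<and> (\<forall>v\<in>S. \<not> lit_holds l v)) \<longrightarrow> S \<noteq> selected_part i)"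
    using Out_iff by simp
  also have "\<dots> \<longleftrightarrow> (\<forall>l\<in>prem r. \<exists>v\<in>selected_part (lit_feat l). lit_holds l v)"
    using selected_part_in_part_sets random_forest_lit_feat_less[OF random_forest assms] by metis
  finally show ?thesis .
qed

lemma sat_prem_iff_RuleArg_In:
  assumes "x \<in> S_L k num D F L" "T \<in> F" "r \<in> T"
  shows "sat_prem r x \<longleftrightarrow> L (RuleArg T r) = In"
proof -
  have feat: "lit_feat l < k" if "l \<in> prem r" for l
    using random_forest_lit_feat_less[OF random_forest assms(2,3) that] .
  have x: "x (lit_feat l) \<in> selected_part (lit_feat l)" if "l \<in> prem r" for l
    using assms(1) feat[OF that] unfolding S_L_eq by blast
  have "lit_holds l (x (lit_feat l)) \<longleftrightarrow> lit_holds l v"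
    if "l \<in> prem r" "v \<in> selected_part (lit_feat l)" for l v
    by (rule lit_holds_constant_on_part_sets[OF feature_space random_forest assms(2,3) that(1)
          selected_part_in_part_sets[OF feat[OF that(1)]] x[OF that(1)] that(2)])
  then show ?thesis unfolding RuleArg_In_iff[OF assms(2,3)] sat_prem_def using x by blast
qed

lemma RuleArg_In_iff_active:
  assumes "T \<in> F" "r \<in> T"
  shows "L (RuleArg T r) = In \<longleftrightarrow> (\<forall>x\<in>S_L k num D F L. active_rule T x r)"
  using sat_prem_iff_RuleArg_In[OF _ assms] S_L_nonempty assms(2) unfolding active_rule_def by blast

lemma RuleArg_Out_if_not_In:
  assumes "T \<in> F" "r \<in> T" "L (RuleArg T r) \<noteq> In"
  shows "L (RuleArg T r) = Out"
  using assms bi_stable RuleArg_in_ex_args[OF assms(1,2)] unfolding bi_stable_def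
  by (cases "L (RuleArg T r)") auto

lemma ex1_RuleArg_In:
  assumes "T \<in> F"
  shows "\<exists>!r. r \<in> T \<and> L (RuleArg T r) = In"
proof -
  obtain x where x: "x \<in> S_L k num D F L" using S_L_nonempty by blast
  have "decision_tree k num D C T" using random_forest assms unfolding random_forest_def by blast
  then have "\<exists>!r. r \<in> T \<and> sat_prem r x"
    using S_L_inputs[OF x] unfolding decision_tree_def by blast
  then show ?thesis using sat_prem_iff_RuleArg_In[OF x assms] by blast
qed

end

theorem lemma2:
  fixes k :: nat and num :: "nat \<Rightarrow> bool" and D :: "nat \<Rightarrow> 'a fval set"
    and C :: "'c set" and F :: "('a,'c) tree set" and L :: "('a,'c) arg \<Rightarrow> label"
  assumes "feature_space k num D"
    and "finite C"
    and "random_forest k num D C F"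
    and "bi_stable (ex_args k num D C F) (ex_att k num D C F) (ex_sup k num D C F) L"
  shows "\<forall>T\<in>F.
           (\<forall>r\<in>T. L (RuleArg T r) = In \<longleftrightarrow> (\<forall>x\<in>S_L k num D F L. active_rule T x r))
         \<and> (\<exists>!r. r \<in> T \<and> L (RuleArg T r) = In)
         \<and> (\<forall>r\<in>T. L (RuleArg T r) \<noteq> In \<longrightarrow> L (RuleArg T r) = Out)"
proof -
  interpret labelled_explanation_bag k num D C F L
    using assms(1,3,4) by unfold_locales
  show ?thesis
    using RuleArg_In_iff_active ex1_RuleArg_In RuleArg_Out_if_not_In by (intro ballI conjI) simp_all
qed

end
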